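(* Assume $\Delta=0$. Let $\mathcal{O}'(K)$ be the subring of $K$ generated (as a ring with $1$) by $\alpha,\beta,\gamma,\alpha l,\beta m$. Then $N$, viewed as an additive subgroup of $K^2$, is an $\mathcal{O}'(K)$-module: for every $\zeta\in N$ and every $x\in\mathcal{O}'(K)$ one has $x\zeta\in N$ (scalar multiplication in $K^2$). In particular $N$ is stable under multiplication by $\theta:=-4+\alpha+\beta+\gamma+\alpha l$.
   Context: Setting. Let $p,q,r\ge 3$ be integers and $W=W(p,q,r)$ the Coxeter group with generators $s_1,s_2,s_3$ and relations $s_i^2=1$, $(s_1s_2)^p=(s_1s_3)^q=(s_2s_3)^r=1$. Let $\alpha=4\cos^2(\pi k_1/p)$, $\beta=4\cos^2(\pi k_2/q)$, $\gamma=4\cos^2(\pi k_3/r)$ with $\gcd(k_1,p)=\gcd(k_2,q)=\gcd(k_3,r)=1$ (so $0<\alpha,\beta,\gamma<4$), and let $l,m\in\mathbb{C}$ with $lm=\gamma$. Let $K\subset\mathbb{C}$ be a field containing $\alpha,\beta,\gamma,l,m$, and $M$ a $3$-dimensional $K$-vector space with basis $(a_1,a_2,a_3)$. The reflection representation $R:W\to GL(M)$ with parameters $(\alpha,\beta,\gamma;l,m)$ is defined by: for $x=\lambda_1a_1+\lambda_2a_2+\lambda_3a_3$, $R(s_1)x=x-(2\lambda_1-\alpha\lambda_2-\beta\lambda_3)a_1$, $R(s_2)x=x-(-\lambda_1+2\lambda_2-l\lambda_3)a_2$, $R(s_3)x=x-(-\lambda_1-m\lambda_2+2\lambda_3)a_3$.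 Put $G=R(W)$ and write $s_i$ for $R(s_i)$. Let $\Delta=8-2\alpha-2\beta-2\gamma-(\alpha l+\beta m)$; $R$ is reducible iff $\Delta=0$. Reducible setting. Assume $\Delta=0$. Put $b=(4-\gamma)a_1+(l+2)a_2+(m+2)a_3$; then the space of $G$-fixed vectors is $C_M(G)=Kb$ and $(b,a_2,a_3)$ is a basis of $M$. Let $N=N(G)$ be the subgroup of elements of $G$ acting trivially on $M/C_M(G)$. Each $\zeta\in N$ satisfies $\zeta(b)=b$, $\zeta(a_2)=a_2+\lambda b$, $\zeta(a_3)=a_3+\mu b$ for a unique $(\lambda,\mu)\in K^2$; the map $\zeta\mapsto(\lambda,\mu)$ is an injective group homomorphism $N\to (K^2,+)$, through which $N$ is identified with an additive subgroup of $K^2$ (and written additively). Put $c_1=(\alpha,\beta)$, $c_2=(-2,l)$, $c_3=(m,-2)\in K^2$ and, for $\zeta=(\lambda,\mu)\in K^2$, $\omega(\zeta)=-\frac{\lambda(l+2)+\mu(m+2)}{4-\gamma}$. *)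

theory Defs
  imports Complex_Main
begin

text \<open>The module M is K^3 with basis a1,a2,a3; we represent a vector by its coordinate
 triple (lambda1, lambda2, lambda3).  Everything is embedded in complex^3 (K is a subfield of C).\<close>

type_synonym vec3 = "complex \<times> complex \<times> complex"

definition vadd :: "vec3 \<Rightarrow> vec3 \<Rightarrow> vec3" where
  "vadd x y = (fst x + fst y, fst (snd x) + fst (snd y), snd (snd x) + snd (snd y))"

definition vsmul :: "complex \<Rightarrow> vec3 \<Rightarrow> vec3" where
  "vsmul c x = (c * fst x, c * fst (snd x), c * snd (snd x))"

definition a1 :: vec3 where "a1 = (1, 0, 0)"
definition a2 :: vec3 where "a2 = (0, 1, 0)"
definition a3 :: vec3 where "a3 = (0, 0, 1)"

definition refl1 :: "complex \<Rightarrow> complex \<Rightarrow> vec3 \<Rightarrow> vec3" where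
  "refl1 \<alpha> \<beta> x = (case x of (x1, x2, x3) \<Rightarrow> (x1 - (2*x1 - \<alpha>*x2 - \<beta>*x3), x2, x3))"

definition refl2 :: "complex \<Rightarrow> vec3 \<Rightarrow> vec3" where
  "refl2 l x = (case x of (x1, x2, x3) \<Rightarrow> (x1, x2 - (-x1 + 2*x2 - l*x3), x3))"

definition refl3 :: "complex \<Rightarrow> vec3 \<Rightarrow> vec3" where
  "refl3 m x = (case x of (x1, x2, x3) \<Rightarrow> (x1, x2, x3 - (-x1 - m*x2 + 2*x3)))"

text \<open>G = R(W): the group generated by the three reflections.  Since each generator
 is an involution, this is the closure of the identity under left composition with generators.\<close>
inductive_set reflG :: "complex \<Rightarrow> complex \<Rightarrow> complex \<Rightarrow> complex \<Rightarrow> (vec3 \<Rightarrow> vec3) set"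
  for \<alpha> \<beta> l m where
  id_in: "id \<in> reflG \<alpha> \<beta> l m"
| s1: "g \<in> reflG \<alpha> \<beta> l m \<Longrightarrow> refl1 \<alpha> \<beta> \<circ> g \<in> reflG \<alpha> \<beta> l m"
| s2: "g \<in> reflG \<alpha> \<beta> l m \<Longrightarrow> refl2 l \<circ> g \<in> reflG \<alpha> \<beta> l m"
| s3: "g \<in> reflG \<alpha> \<beta> l m \<Longrightarrow> refl3 m \<circ> g \<in> reflG \<alpha> \<beta> l m"

definition fixedG :: "complex \<Rightarrow> complex \<Rightarrow> complex \<Rightarrow> complex \<Rightarrow> vec3 set" where
  "fixedG \<alpha> \<beta> l m = {v. \<forall>g \<in> reflG \<alpha> \<beta> l m. g v = v}"

text \<open>N(G): elements of G acting trivially on M / C_M(G).\<close>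
definition NG :: "complex \<Rightarrow> complex \<Rightarrow> complex \<Rightarrow> complex \<Rightarrow> (vec3 \<Rightarrow> vec3) set" where
  "NG \<alpha> \<beta> l m = {g \<in> reflG \<alpha> \<beta> l m.
      \<forall>x. \<exists>c \<in> fixedG \<alpha> \<beta> l m. g x = vadd x c}"

definition bvec :: "complex \<Rightarrow> complex \<Rightarrow> complex \<Rightarrow> vec3" where
  "bvec \<gamma> l m = (4 - \<gamma>, l + 2, m + 2)"

definition Npairs :: "complex \<Rightarrow> complex \<Rightarrow> complex \<Rightarrow> complex \<Rightarrow> complex \<Rightarrow> (complex \<times> complex) set" where
  "Npairs \<alpha> \<beta> \<gamma> l m = {(lam, mu). \<exists>g \<in> NG \<alpha> \<beta> l m.
      g a2 = vadd a2 (vsmul lam (bvec \<gamma> l m)) \<and> g a3 = vadd a3 (vsmul mu (bvec \<gamma> l m))}"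

inductive_set Oprime :: "complex \<Rightarrow> complex \<Rightarrow> complex \<Rightarrow> complex \<Rightarrow> complex \<Rightarrow> complex set"
  for \<alpha> \<beta> \<gamma> l m where
  one: "1 \<in> Oprime \<alpha> \<beta> \<gamma> l m"
| gen_a: "\<alpha> \<in> Oprime \<alpha> \<beta> \<gamma> l m"
| gen_b: "\<beta> \<in> Oprime \<alpha> \<beta> \<gamma> l m"
| gen_c: "\<gamma> \<in> Oprime \<alpha> \<beta> \<gamma> l m"
| gen_al: "\<alpha> * l \<in> Oprime \<alpha> \<beta> \<gamma> l m"
| gen_bm: "\<beta> * m \<in> Oprime \<alpha> \<beta> \<gamma> l m"
| add: "x \<in> Oprime \<alpha> \<beta> \<gamma> l m \<Longrightarrow> y \<in> Oprime \<alpha> \<beta> \<gamma> l m \<Longrightarrow> x + y \<in> Oprime \<alpha> \<beta> \<gamma> l m"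
| neg: "x \<in> Oprime \<alpha> \<beta> \<gamma> l m \<Longrightarrow> - x \<in> Oprime \<alpha> \<beta> \<gamma> l m"
| mul: "x \<in> Oprime \<alpha> \<beta> \<gamma> l m \<Longrightarrow> y \<in> Oprime \<alpha> \<beta> \<gamma> l m \<Longrightarrow> x * y \<in> Oprime \<alpha> \<beta> \<gamma> l m"

end

theory Submission
  imports Defs "HOL-Library.Product_Plus"
begin

text \<open>Since \<Delta> = 0, the vector b is fixed by G, and N consists of the transvections
  v \<mapsto> v + f(v) b with f(a2) = \<lambda>, f(a3) = \<mu> and f(a1) = \<omega>(\<lambda>, \<mu>) forced by f(b) = 0;
  composing transvections adds their parameters. Conjugating the transvection of \<zeta> by
  s1, s2, s3 yields that of \<zeta> + \<omega>(\<zeta>) c1, \<zeta> + \<lambda> c2, \<zeta> + \<mu> c3, so N is stable under the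
  additive maps \<zeta> \<mapsto> \<omega>(\<zeta>) c1, \<lambda> c2, \<mu> c3. Because \<Delta> = 0, multiplication by each of
  \<alpha>, \<beta>, \<gamma>, \<alpha> l, \<beta> m is an integer polynomial in these three maps, and the scalars
  preserving N form a subring.\<close>

definition vlinear :: "(vec3 \<Rightarrow> vec3) \<Rightarrow> bool" where
  "vlinear g \<longleftrightarrow> (\<forall>x y. g (vadd x y) = vadd (g x) (g y)) \<and> (\<forall>c x. g (vsmul c x) = vsmul c (g x))"

lemma vlinear_vadd: "vlinear g \<Longrightarrow> g (vadd x y) = vadd (g x) (g y)"
  and vlinear_vsmul: "vlinear g \<Longrightarrow> g (vsmul c x) = vsmul c (g x)"
  unfolding vlinear_def by blast+

lemma vlinear_id: "vlinear id"
  by (simp add: vlinear_def)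

lemma vlinear_comp: "vlinear f \<Longrightarrow> vlinear g \<Longrightarrow> vlinear (f \<circ> g)"
  unfolding vlinear_def comp_def by metis

lemma vlinear_refl1: "vlinear (refl1 \<alpha> \<beta>)"
  and vlinear_refl2: "vlinear (refl2 l)"
  and vlinear_refl3: "vlinear (refl3 m)"
  by (auto simp: vlinear_def refl1_def refl2_def refl3_def vadd_def vsmul_def algebra_simps
      split: prod.splits)

lemma refl1_refl1 [simp]: "refl1 \<alpha> \<beta> (refl1 \<alpha> \<beta> x) = x"
  and refl2_refl2 [simp]: "refl2 l (refl2 l x) = x"
  and refl3_refl3 [simp]: "refl3 m (refl3 m x) = x"
  by (auto simp: refl1_def refl2_def refl3_def split: prod.splits)

lemma vlinear_decomp:
  assumes "vlinear g"
  shows "g v = vadd (vsmul (fst v) (g a1)) (vadd (vsmul (fst (snd v)) (g a2)) (vsmul (snd (snd v)) (g a3)))"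
proof -
  have "v = vadd (vsmul (fst v) a1) (vadd (vsmul (fst (snd v)) a2) (vsmul (snd (snd v)) a3))"
    by (cases v) (simp add: vadd_def vsmul_def a1_def a2_def a3_def)
  then show ?thesis
    using assms unfolding vlinear_def by metis
qed

lemma vlinear_eqI:
  assumes "vlinear g" "vlinear h" "g a1 = h a1" "g a2 = h a2" "g a3 = h a3"
  shows "g = h"
proof
  fix v
  show "g v = h v"
    unfolding vlinear_decomp[OF assms(1), of v] vlinear_decomp[OF assms(2), of v] assms(3-5) ..
qed

lemma reflG_vlinear: "g \<in> reflG \<alpha> \<beta> l m \<Longrightarrow> vlinear g"
  by (induction rule: reflG.induct)
    (metis vlinear_comp vlinear_id vlinear_refl1 vlinear_refl2 vlinear_refl3)+

lemma reflG_comp: "g \<in> reflG \<alpha> \<beta> l m \<Longrightarrow> h \<in> reflG \<alpha> \<beta> l m \<Longrightarrow> g \<circ> h \<in> reflG \<alpha> \<beta> l m"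
proof (induction rule: reflG.induct)
  case id_in
  then show ?case by simp
next
  case (s1 g)
  from reflG.s1[OF s1.IH[OF s1.prems]] show ?case by (simp only: comp_assoc)
next
  case (s2 g)
  from reflG.s2[OF s2.IH[OF s2.prems]] show ?case by (simp only: comp_assoc)
next
  case (s3 g)
  from reflG.s3[OF s3.IH[OF s3.prems]] show ?case by (simp only: comp_assoc)
qed

lemma refl1_in_reflG: "refl1 \<alpha> \<beta> \<in> reflG \<alpha> \<beta> l m"
  and refl2_in_reflG: "refl2 l \<in> reflG \<alpha> \<beta> l m"
  and refl3_in_reflG: "refl3 m \<in> reflG \<alpha> \<beta> l m"
  using reflG.s1[OF reflG.id_in] reflG.s2[OF reflG.id_in] reflG.s3[OF reflG.id_in] by simp_all

lemma reflG_left_inverse: "g \<in> reflG \<alpha> \<beta> l m \<Longrightarrow> \<exists>h \<in> reflG \<alpha> \<beta> l m. h \<circ> g = id"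
proof (induction rule: reflG.induct)
  case id_in
  show ?case by (intro bexI[of _ id] reflG.id_in) simp
next
  case (s1 g)
  then obtain h where "h \<in> reflG \<alpha> \<beta> l m" "h \<circ> g = id" by blast
  then show ?case
    by (intro bexI[of _ "h \<circ> refl1 \<alpha> \<beta>"] reflG_comp refl1_in_reflG) (auto simp: fun_eq_iff)
next
  case (s2 g)
  then obtain h where "h \<in> reflG \<alpha> \<beta> l m" "h \<circ> g = id" by blast
  then show ?case
    by (intro bexI[of _ "h \<circ> refl2 l"] reflG_comp refl2_in_reflG) (auto simp: fun_eq_iff)
next
  case (s3 g)
  then obtain h where "h \<in> reflG \<alpha> \<beta> l m" "h \<circ> g = id" by blast
  then show ?case
    by (intro bexI[of _ "h \<circ> refl3 m"] reflG_comp refl3_in_reflG) (auto simp: fun_eq_iff)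
qed

definition pscale :: "complex \<Rightarrow> complex \<times> complex \<Rightarrow> complex \<times> complex" where
  "pscale x \<zeta> = (x * fst \<zeta>, x * snd \<zeta>)"

lemma fst_pscale [simp]: "fst (pscale x \<zeta>) = x * fst \<zeta>"
  and snd_pscale [simp]: "snd (pscale x \<zeta>) = x * snd \<zeta>"
  by (simp_all add: pscale_def)

locale reducible_reflection_rep =
  fixes \<alpha> \<beta> \<gamma> l m :: complex
  assumes lm: "l * m = \<gamma>"
    and Delta_zero: "8 - 2*\<alpha> - 2*\<beta> - 2*\<gamma> - (\<alpha>*l + \<beta>*m) = 0"
    and gamma_ne_4: "\<gamma> \<noteq> 4"
begin

abbreviation b :: vec3 where "b \<equiv> bvec \<gamma> l m"

abbreviation G :: "(vec3 \<Rightarrow> vec3) set" where "G \<equiv> reflG \<alpha> \<beta> l m"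

abbreviation N :: "(complex \<times> complex) set" where "N \<equiv> Npairs \<alpha> \<beta> \<gamma> l m"

definition omega :: "complex \<times> complex \<Rightarrow> complex" where
  "omega \<zeta> = - (fst \<zeta> * (l + 2) + snd \<zeta> * (m + 2)) / (4 - \<gamma>)"

abbreviation c1 :: "complex \<times> complex" where "c1 \<equiv> (\<alpha>, \<beta>)"
abbreviation c2 :: "complex \<times> complex" where "c2 \<equiv> (-2, l)"
abbreviation c3 :: "complex \<times> complex" where "c3 \<equiv> (m, -2)"

lemma omega_add: "omega (\<zeta> + \<eta>) = omega \<zeta> + omega \<eta>"
  by (simp add: omega_def add_divide_distrib[symmetric] algebra_simps)

lemma omega_pscale: "omega (pscale t \<zeta>) = t * omega \<zeta>"
  by (simp add: omega_def pscale_def algebra_simps)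

lemma four_minus_gamma_mult_omega: "(4 - \<gamma>) * omega \<zeta> = - (fst \<zeta> * (l + 2) + snd \<zeta> * (m + 2))"
  using gamma_ne_4 by (simp add: omega_def)

lemma omega_c1: "omega c1 = -2"
proof -
  have "\<alpha> * (l + 2) + \<beta> * (m + 2) = 2 * (4 - \<gamma>)"
    using Delta_zero by (simp add: algebra_simps)
  then show ?thesis
    using gamma_ne_4 by (simp add: omega_def field_simps)
qed

lemma omega_c2: "omega c2 = 1"
  and omega_c3: "omega c3 = 1"
  using gamma_ne_4 lm by (simp_all add: omega_def field_simps)

definition tform :: "complex \<times> complex \<Rightarrow> vec3 \<Rightarrow> complex" where
  "tform \<zeta> v = fst v * omega \<zeta> + fst (snd v) * fst \<zeta> + snd (snd v) * snd \<zeta>"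

definition transvection :: "complex \<times> complex \<Rightarrow> vec3 \<Rightarrow> vec3" where
  "transvection \<zeta> v = vadd v (vsmul (tform \<zeta> v) b)"

lemma tform_b: "tform \<zeta> b = 0"
  using gamma_ne_4 by (simp add: tform_def omega_def bvec_def field_simps)

lemma refl1_b: "refl1 \<alpha> \<beta> b = b"
  using Delta_zero by (simp add: refl1_def bvec_def algebra_simps)

lemma refl2_b: "refl2 l b = b"
  and refl3_b: "refl3 m b = b"
  using lm by (simp_all add: refl2_def refl3_def bvec_def algebra_simps)

lemma reflG_b: "g \<in> G \<Longrightarrow> g b = b"
  by (induction rule: reflG.induct) (simp_all add: refl1_b refl2_b refl3_b)

lemma vlinear_transvection: "vlinear (transvection \<zeta>)"
  by (auto simp: vlinear_def transvection_def tform_def vadd_def vsmul_def algebra_simps)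

lemma transvection_b: "transvection \<zeta> b = b"
  by (simp add: transvection_def tform_b vadd_def vsmul_def)

lemma transvection_a2: "transvection \<zeta> a2 = vadd a2 (vsmul (fst \<zeta>) b)"
  and transvection_a3: "transvection \<zeta> a3 = vadd a3 (vsmul (snd \<zeta>) b)"
  by (simp_all add: transvection_def tform_def a2_def a3_def)

lemma a1_in_span: "a1 = vsmul (inverse (4 - \<gamma>)) (vadd b (vadd (vsmul (-(l+2)) a2) (vsmul (-(m+2)) a3)))"
  using gamma_ne_4 by (simp add: a1_def a2_def a3_def bvec_def vadd_def vsmul_def)

lemma vlinear_eqI_b:
  assumes "vlinear g" "vlinear h" "g b = h b" "g a2 = h a2" "g a3 = h a3"
  shows "g = h"
proof (rule vlinear_eqI[OF assms(1,2) _ assms(4,5)])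
  have a1_image: "f a1 = vsmul (inverse (4 - \<gamma>)) (vadd (f b) (vadd (vsmul (-(l+2)) (f a2)) (vsmul (-(m+2)) (f a3))))"
    if "vlinear f" for f
    using that by (subst a1_in_span) (simp add: vlinear_vadd vlinear_vsmul)
  show "g a1 = h a1"
    unfolding a1_image[OF assms(1)] a1_image[OF assms(2)] assms(3-5) ..
qed

lemma reflG_eq_transvection:
  assumes "g \<in> G" "g a2 = vadd a2 (vsmul (fst \<zeta>) b)" "g a3 = vadd a3 (vsmul (snd \<zeta>) b)"
  shows "g = transvection \<zeta>"
  using assms reflG_b[OF assms(1)]
  by (intro vlinear_eqI_b reflG_vlinear vlinear_transvection) (simp_all add: transvection_b transvection_a2 transvection_a3)

lemma vsmul_b_fixedG: "vsmul t b \<in> fixedG \<alpha> \<beta> l m"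
proof -
  have "g (vsmul t b) = vsmul t b" if "g \<in> G" for g
    using reflG_vlinear[OF that] reflG_b[OF that] by (simp add: vlinear_vsmul)
  then show ?thesis
    by (simp add: fixedG_def)
qed

lemma Npairs_iff: "\<zeta> \<in> N \<longleftrightarrow> transvection \<zeta> \<in> G"
proof
  assume "\<zeta> \<in> N"
  then obtain g where "g \<in> G" "g a2 = vadd a2 (vsmul (fst \<zeta>) b)" "g a3 = vadd a3 (vsmul (snd \<zeta>) b)"
    by (cases \<zeta>) (auto simp: Npairs_def NG_def)
  then show "transvection \<zeta> \<in> G"
    using reflG_eq_transvection by simp
next
  assume "transvection \<zeta> \<in> G"
  moreover have "\<forall>x. \<exists>c \<in> fixedG \<alpha> \<beta> l m. transvection \<zeta> x = vadd x c"
    using vsmul_b_fixedG by (auto simp: transvection_def)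
  ultimately have "transvection \<zeta> \<in> NG \<alpha> \<beta> l m"
    by (simp add: NG_def)
  then show "\<zeta> \<in> N"
    unfolding Npairs_def using transvection_a2[of \<zeta>] transvection_a3[of \<zeta>] by (cases \<zeta>) auto
qed

lemma tform_vadd_b: "tform \<zeta> (vadd v (vsmul t b)) = tform \<zeta> v"
proof -
  have "tform \<zeta> (vadd v (vsmul t b)) = tform \<zeta> v + t * tform \<zeta> b"
    by (simp add: tform_def vadd_def vsmul_def bvec_def algebra_simps)
  then show ?thesis by (simp add: tform_b)
qed

lemma transvection_comp: "transvection \<zeta> \<circ> transvection \<eta> = transvection (\<zeta> + \<eta>)"
  by (auto simp: fun_eq_iff transvection_def tform_vadd_b)
     (simp add: tform_def omega_add vadd_def vsmul_def algebra_simps)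

lemma transvection_zero: "transvection 0 = id"
  by (simp add: fun_eq_iff transvection_def tform_def omega_def vadd_def vsmul_def)

lemma N_zero: "0 \<in> N"
  using reflG.id_in by (simp add: Npairs_iff transvection_zero)

lemma N_add: "\<zeta> \<in> N \<Longrightarrow> \<eta> \<in> N \<Longrightarrow> \<zeta> + \<eta> \<in> N"
  using reflG_comp by (fastforce simp: Npairs_iff simp flip: transvection_comp)

lemma N_uminus:
  assumes "\<zeta> \<in> N"
  shows "- \<zeta> \<in> N"
proof -
  obtain h where "h \<in> G" and h: "h \<circ> transvection \<zeta> = id"
    using reflG_left_inverse assms unfolding Npairs_iff by blast
  have "h = h \<circ> (transvection \<zeta> \<circ> transvection (- \<zeta>))"
    by (simp add: transvection_comp transvection_zero)
  also have "\<dots> = transvection (- \<zeta>)"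
    by (simp only: comp_assoc[symmetric] h id_comp)
  finally show ?thesis
    using \<open>h \<in> G\<close> by (simp add: Npairs_iff)
qed

lemma N_diff: "\<zeta> \<in> N \<Longrightarrow> \<eta> \<in> N \<Longrightarrow> \<zeta> - \<eta> \<in> N"
  using N_add[of \<zeta> "- \<eta>"] N_uminus by simp

lemma N_pscale_of_nat: "\<zeta> \<in> N \<Longrightarrow> pscale (of_nat k) \<zeta> \<in> N"
proof (induction k)
  case 0
  then show ?case using N_zero by (simp add: pscale_def zero_prod_def)
next
  case (Suc k)
  then have "\<zeta> + pscale (of_nat k) \<zeta> \<in> N"
    by (simp add: N_add)
  moreover have "\<zeta> + pscale (of_nat k) \<zeta> = pscale (of_nat (Suc k)) \<zeta>"
    by (simp add: prod_eq_iff algebra_simps)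
  ultimately show ?case
    by simp
qed

lemma N_pscale_numeral: "\<zeta> \<in> N \<Longrightarrow> pscale (numeral k) \<zeta> \<in> N"
  using N_pscale_of_nat[of \<zeta> "numeral k"] by simp

text \<open>Conjugation by s_i acts on N, written additively, as \<zeta> \<mapsto> \<zeta> + conjdiff_i \<zeta>.\<close>
definition conjdiff1 :: "complex \<times> complex \<Rightarrow> complex \<times> complex" where
  "conjdiff1 \<zeta> = pscale (omega \<zeta>) c1"
definition conjdiff2 :: "complex \<times> complex \<Rightarrow> complex \<times> complex" where
  "conjdiff2 \<zeta> = pscale (fst \<zeta>) c2"
definition conjdiff3 :: "complex \<times> complex \<Rightarrow> complex \<times> complex" where
  "conjdiff3 \<zeta> = pscale (snd \<zeta>) c3"

lemma refl1_vadd_b: "refl1 \<alpha> \<beta> (vadd v (vsmul t b)) = vadd (refl1 \<alpha> \<beta> v) (vsmul t b)"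
  by (simp add: vlinear_vadd[OF vlinear_refl1] vlinear_vsmul[OF vlinear_refl1] refl1_b)

lemma refl2_vadd_b: "refl2 l (vadd v (vsmul t b)) = vadd (refl2 l v) (vsmul t b)"
  by (simp add: vlinear_vadd[OF vlinear_refl2] vlinear_vsmul[OF vlinear_refl2] refl2_b)

lemma refl3_vadd_b: "refl3 m (vadd v (vsmul t b)) = vadd (refl3 m v) (vsmul t b)"
  by (simp add: vlinear_vadd[OF vlinear_refl3] vlinear_vsmul[OF vlinear_refl3] refl3_b)

lemma tform_refl1: "tform \<zeta> (refl1 \<alpha> \<beta> v) = tform (\<zeta> + conjdiff1 \<zeta>) v"
  by (cases v) (simp add: tform_def refl1_def conjdiff1_def omega_add omega_pscale omega_c1
      algebra_simps)

lemma tform_refl2: "tform \<zeta> (refl2 l v) = tform (\<zeta> + conjdiff2 \<zeta>) v"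
  by (cases v) (simp add: tform_def refl2_def conjdiff2_def omega_add omega_pscale omega_c2
      algebra_simps)

lemma tform_refl3: "tform \<zeta> (refl3 m v) = tform (\<zeta> + conjdiff3 \<zeta>) v"
  by (cases v) (simp add: tform_def refl3_def conjdiff3_def omega_add omega_pscale omega_c3
      algebra_simps)

lemma refl1_conj_transvection:
  "refl1 \<alpha> \<beta> \<circ> transvection \<zeta> \<circ> refl1 \<alpha> \<beta> = transvection (\<zeta> + conjdiff1 \<zeta>)"
  by (simp add: fun_eq_iff transvection_def refl1_vadd_b tform_refl1)

lemma refl2_conj_transvection:
  "refl2 l \<circ> transvection \<zeta> \<circ> refl2 l = transvection (\<zeta> + conjdiff2 \<zeta>)"
  by (simp add: fun_eq_iff transvection_def refl2_vadd_b tform_refl2)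

lemma refl3_conj_transvection:
  "refl3 m \<circ> transvection \<zeta> \<circ> refl3 m = transvection (\<zeta> + conjdiff3 \<zeta>)"
  by (simp add: fun_eq_iff transvection_def refl3_vadd_b tform_refl3)

lemma N_conjdiff1: "\<zeta> \<in> N \<Longrightarrow> conjdiff1 \<zeta> \<in> N"
  using N_diff[of "\<zeta> + conjdiff1 \<zeta>" \<zeta>] reflG_comp refl1_in_reflG
  by (simp add: Npairs_iff flip: refl1_conj_transvection)

lemma N_conjdiff2: "\<zeta> \<in> N \<Longrightarrow> conjdiff2 \<zeta> \<in> N"
  using N_diff[of "\<zeta> + conjdiff2 \<zeta>" \<zeta>] reflG_comp refl2_in_reflG
  by (simp add: Npairs_iff flip: refl2_conj_transvection)

lemma N_conjdiff3: "\<zeta> \<in> N \<Longrightarrow> conjdiff3 \<zeta> \<in> N"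
  using N_diff[of "\<zeta> + conjdiff3 \<zeta>" \<zeta>] reflG_comp refl3_in_reflG
  by (simp add: Npairs_iff flip: refl3_conj_transvection)

lemma pair_eq_by_scaling:
  assumes "(4 - \<gamma>) * fst \<zeta> = (4 - \<gamma>) * fst \<eta>" "(4 - \<gamma>) * snd \<zeta> = (4 - \<gamma>) * snd \<eta>"
  shows "\<zeta> = \<eta>"
  using assms gamma_ne_4 by (simp add: prod_eq_iff)

lemmas conjdiff_simps = conjdiff1_def conjdiff2_def conjdiff3_def omega_pscale omega_c1 omega_c2 omega_c3
  fst_add snd_add fst_diff snd_diff fst_pscale snd_pscale fst_conv snd_conv

text \<open>For example \<alpha> = (2 + A2)(2 + A1) + A1 A2, where Ai = conjdiff_i. The identities follow
  from \<Delta> = 0 and l m = \<gamma> after clearing the denominator 4 - \<gamma> of \<omega>.\<close>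
lemma pscale_alpha:
  "pscale \<alpha> \<zeta> =
     pscale 4 \<zeta> + pscale 2 (conjdiff1 \<zeta>) + pscale 2 (conjdiff2 \<zeta>)
     + conjdiff2 (conjdiff1 \<zeta>) + conjdiff1 (conjdiff2 \<zeta>)"
  by (intro pair_eq_by_scaling; simp only: conjdiff_simps;
      (algebra | insert four_minus_gamma_mult_omega[of \<zeta>] Delta_zero lm, algebra))

lemma pscale_beta:
  "pscale \<beta> \<zeta> =
     pscale 4 \<zeta> + pscale 2 (conjdiff1 \<zeta>) + pscale 2 (conjdiff3 \<zeta>)
     + conjdiff3 (conjdiff1 \<zeta>) + conjdiff1 (conjdiff3 \<zeta>)"
  by (intro pair_eq_by_scaling; simp only: conjdiff_simps;
      (algebra | insert four_minus_gamma_mult_omega[of \<zeta>] Delta_zero lm, algebra))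

lemma pscale_gamma:
  "pscale \<gamma> \<zeta> =
     pscale 4 \<zeta> + pscale 2 (conjdiff2 \<zeta>) + pscale 2 (conjdiff3 \<zeta>)
     + conjdiff3 (conjdiff2 \<zeta>) + conjdiff2 (conjdiff3 \<zeta>)"
  by (intro pair_eq_by_scaling; simp only: conjdiff_simps;
      (algebra | insert four_minus_gamma_mult_omega[of \<zeta>] Delta_zero lm, algebra))

lemma pscale_alpha_l:
  "pscale (\<alpha> * l) \<zeta> =
     conjdiff1 (conjdiff3 (conjdiff2 \<zeta>)) - conjdiff2 (conjdiff3 (conjdiff1 \<zeta>))
     - pscale 2 (conjdiff2 (conjdiff1 \<zeta>) + conjdiff3 (conjdiff1 \<zeta>) + conjdiff2 (conjdiff3 \<zeta>))
     - pscale 4 (conjdiff1 \<zeta> + conjdiff2 \<zeta> + conjdiff3 \<zeta>) - pscale 8 \<zeta>"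
  by (intro pair_eq_by_scaling; simp only: conjdiff_simps;
      (algebra | insert four_minus_gamma_mult_omega[of \<zeta>] Delta_zero lm, algebra))

lemma pscale_beta_m:
  "pscale (\<beta> * m) \<zeta> =
     conjdiff2 (conjdiff3 (conjdiff1 \<zeta>)) - conjdiff1 (conjdiff3 (conjdiff2 \<zeta>))
     - pscale 2 (conjdiff1 (conjdiff2 \<zeta>) + conjdiff3 (conjdiff2 \<zeta>) + conjdiff1 (conjdiff3 \<zeta>))
     - pscale 4 (conjdiff1 \<zeta> + conjdiff2 \<zeta> + conjdiff3 \<zeta>) - pscale 8 \<zeta>"
  by (intro pair_eq_by_scaling; simp only: conjdiff_simps;
      (algebra | insert four_minus_gamma_mult_omega[of \<zeta>] Delta_zero lm, algebra))

lemma N_pscale_generators: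
  assumes "\<zeta> \<in> N"
  shows "pscale \<alpha> \<zeta> \<in> N" "pscale \<beta> \<zeta> \<in> N" "pscale \<gamma> \<zeta> \<in> N"
    "pscale (\<alpha> * l) \<zeta> \<in> N" "pscale (\<beta> * m) \<zeta> \<in> N"
  unfolding pscale_alpha pscale_beta pscale_gamma pscale_alpha_l pscale_beta_m
  by (intro N_add N_diff N_pscale_numeral N_conjdiff1 N_conjdiff2 N_conjdiff3 assms)+

lemma N_pscale_Oprime: "x \<in> Oprime \<alpha> \<beta> \<gamma> l m \<Longrightarrow> \<zeta> \<in> N \<Longrightarrow> pscale x \<zeta> \<in> N"
proof (induction arbitrary: \<zeta> rule: Oprime.induct)
  case one
  then show ?case by (simp add: pscale_def)
next
  case (add x y)
  then have "pscale x \<zeta> + pscale y \<zeta> \<in> N" by (simp add: N_add)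
  then show ?case by (simp add: pscale_def distrib_right)
next
  case (neg x)
  then have "- pscale x \<zeta> \<in> N" by (simp add: N_uminus)
  then show ?case by (simp add: pscale_def)
next
  case (mul x y)
  then have "pscale x (pscale y \<zeta>) \<in> N" by simp
  then show ?case by (simp add: pscale_def mult.assoc)
qed (use N_pscale_generators in simp_all)

end

lemma theta_in_Oprime: "-4 + \<alpha> + \<beta> + \<gamma> + \<alpha> * l \<in> Oprime \<alpha> \<beta> \<gamma> l m"
proof -
  have "- (1 + 1 + 1 + 1) + \<alpha> + \<beta> + \<gamma> + \<alpha> * l \<in> Oprime \<alpha> \<beta> \<gamma> l m"
    by (intro Oprime.add Oprime.neg Oprime.one Oprime.gen_a Oprime.gen_b Oprime.gen_c Oprime.gen_al)
  then show ?thesis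
    by simp
qed

lemma cos_pi_frac_squared_ne_1:
  fixes k r :: nat
  assumes "r \<ge> 2" "coprime k r"
  shows "(cos (pi * real k / real r))\<^sup>2 \<noteq> 1"
proof
  assume "(cos (pi * real k / real r))\<^sup>2 = 1"
  then have "sin (pi * real k / real r) = 0"
    using sin_cos_squared_add[of "pi * real k / real r"] by simp
  then obtain i :: int where "pi * real k / real r = of_int i * pi"
    using sin_zero_iff_int2 by blast
  then have "real k = of_int i * real r"
    using assms(1) by (simp add: field_simps)
  then have "int k = i * int r"
    by (metis of_int_eq_iff of_int_mult of_int_of_nat_eq)
  then have "r dvd k"
    by (metis dvd_triv_right int_dvd_int_iff)
  then have "r dvd 1"
    using assms(2) by (metis coprime_common_divisor_nat dvd_refl)
  then show False
    using assms(1) by simp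
qed

theorem theorem1:
  fixes p q r k1 k2 k3 :: nat and \<alpha> \<beta> \<gamma> l m :: complex and K :: "complex set"
  assumes "p \<ge> 3" "q \<ge> 3" "r \<ge> 3"
    and "coprime k1 p" "coprime k2 q" "coprime k3 r"
    and "\<alpha> = complex_of_real (4 * (cos (pi * real k1 / real p))\<^sup>2)"
    and "\<beta> = complex_of_real (4 * (cos (pi * real k2 / real q))\<^sup>2)"
    and "\<gamma> = complex_of_real (4 * (cos (pi * real k3 / real r))\<^sup>2)"
    and "l * m = \<gamma>"
    and "0 \<in> K" "1 \<in> K" "\<And>x y. x \<in> K \<Longrightarrow> y \<in> K \<Longrightarrow> x + y \<in> K"
    and "\<And>x. x \<in> K \<Longrightarrow> - x \<in> K" "\<And>x y. x \<in> K \<Longrightarrow> y \<in> K \<Longrightarrow> x * y \<in> K"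
    and "\<And>x. x \<in> K \<Longrightarrow> x \<noteq> 0 \<Longrightarrow> inverse x \<in> K"
    and "\<alpha> \<in> K" "\<beta> \<in> K" "\<gamma> \<in> K" "l \<in> K" "m \<in> K"
    and "8 - 2*\<alpha> - 2*\<beta> - 2*\<gamma> - (\<alpha>*l + \<beta>*m) = 0"
  shows "(\<forall>\<zeta> \<in> Npairs \<alpha> \<beta> \<gamma> l m. \<forall>x \<in> Oprime \<alpha> \<beta> \<gamma> l m.
            (x * fst \<zeta>, x * snd \<zeta>) \<in> Npairs \<alpha> \<beta> \<gamma> l m)
       \<and> (\<forall>\<zeta> \<in> Npairs \<alpha> \<beta> \<gamma> l m.
            let \<theta> = -4 + \<alpha> + \<beta> + \<gamma> + \<alpha>*l in (\<theta> * fst \<zeta>, \<theta> * snd \<zeta>) \<in> Npairs \<alpha> \<beta> \<gamma> l m)"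
proof -
  have "4 * (cos (pi * real k3 / real r))\<^sup>2 \<noteq> (4 :: real)"
    using cos_pi_frac_squared_ne_1[of r k3] assms(3,6) by simp
  then have "\<gamma> \<noteq> 4"
    unfolding assms(9) by (metis of_real_eq_iff of_real_numeral)
  then interpret reducible_reflection_rep \<alpha> \<beta> \<gamma> l m
    using assms(10,22) by unfold_locales
  have "(x * fst \<zeta>, x * snd \<zeta>) \<in> N" if "\<zeta> \<in> N" "x \<in> Oprime \<alpha> \<beta> \<gamma> l m" for \<zeta> x
    using N_pscale_Oprime[OF that(2,1)] by (simp add: pscale_def)
  then show ?thesis
    using theta_in_Oprime by (simp add: Let_def)
qed

end
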